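(* For every configuration $C$ of the Krivine Abstract Machine, $C \to^{*} \langle \lambda x.t, []\rangle$ for some $x$ and $t$ if and only if $[\![C]\!]$ has a weak observable action on the coname $\overline{b}$ with respect to the empty set of hidden names, i.e., there exist $P', Q, R$ with $[\![C]\!] \Rightarrow P'$ and $P' \xrightarrow{\overline{b}\langle Q\rangle} R$.
   Context: HOcore processes are given by $P,Q ::= a(x).P \mid \overline{a}\langle P\rangle \mid P \parallel Q \mid x \mid 0$, where $a,b,\dots$ are channel names and $x,y,\dots$ are process variables; $a(x).P$ binds $x$ in $P$; parallel composition is associative and commutative with unit $0$. The labelled transition system has labels $\tau$, $\overline{a}\langle P\rangle$ and $a(P)$, with rules: $\overline{a}\langle P\rangle \xrightarrow{\overline{a}\langle P\rangle} 0$; $a(x).Q \xrightarrow{a(P)} Q\{P/x\}$; if $P \xrightarrow{l} P'$ then $P\parallel Q \xrightarrow{l} P'\parallel Q$ (and symmetrically); if $P \xrightarrow{\overline{a}\langle R\rangle} P'$ and $Q \xrightarrow{a(R)} Q'$ then $P \parallel Q \xrightarrow{\tau} P'\parallel Q'$ (and symmetrically). $\Rightarrow$ is the reflexive transitive closure of $\xrightarrow{\tau}$. KAM: terms $t,s ::= x \mid t\,s \mid \lambda x.t$; stacks $\pi ::= t :: \pi \mid []$; configurations $C ::= \langle t, \pi\rangle$ with all terms closed. Transitions: $\langle t\,s, \pi\rangle \to \langle t, s :: \pi\rangle$ and $\langle \lambda x.t, s::\pi\rangle \to \langle t\{s/x\}, \pi\rangle$. Translation (channel names $c, hd, b$; $p$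 a fresh variable): $[\![[]]\!] = \overline{b}\langle 0\rangle$; $[\![t::\pi]\!] = \overline{hd}\langle [\![t]\!]\rangle \parallel \overline{c}\langle [\![\pi]\!]\rangle$; $[\![\langle t,\pi\rangle]\!] = [\![t]\!] \parallel \overline{c}\langle[\![\pi]\!]\rangle$; $[\![t\,s]\!] = c(p).([\![t]\!] \parallel \overline{c}\langle \overline{hd}\langle[\![s]\!]\rangle \parallel \overline{c}\langle p\rangle\rangle)$; $[\![\lambda x.t]\!] = c(p).(hd(x).[\![t]\!] \parallel p)$; $[\![x]\!] = x$. *)

theory Defs
  imports Main
begin

(* channel names: the three distinguished names c, hd, b plus infinitely many others *)
datatype name = Nc | Nhd | Nb | Nm nat

(* process variables: variables coming from lambda-terms (TV x) and the fresh variable p *)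
datatype pvar = TV nat | Pv

datatype proc =
    Inp name pvar proc
  | Out name proc
  | Par proc proc
  | PVar pvar
  | Nil

(* substitution P{Q/x}; only ever applied with closed Q, so no capture can occur *)
fun psubst :: "proc \<Rightarrow> pvar \<Rightarrow> proc \<Rightarrow> proc" where
  "psubst (Inp a y P) x Q = (if y = x then Inp a y P else Inp a y (psubst P x Q))"
| "psubst (Out a P) x Q = Out a (psubst P x Q)"
| "psubst (Par P1 P2) x Q = Par (psubst P1 x Q) (psubst P2 x Q)"
| "psubst (PVar y) x Q = (if y = x then Q else PVar y)"
| "psubst Nil x Q = Nil"

datatype label = Tau | OutL name proc | InL name proc

inductive trans :: "proc \<Rightarrow> label \<Rightarrow> proc \<Rightarrow> bool" where
  t_out: "trans (Out a P) (OutL a P) Nil"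
| t_inp: "trans (Inp a x Q) (InL a P) (psubst Q x P)"
| t_parL: "trans P l P' \<Longrightarrow> trans (Par P Q) l (Par P' Q)"
| t_parR: "trans Q l Q' \<Longrightarrow> trans (Par P Q) l (Par P Q')"
| t_comL: "trans P (OutL a R) P' \<Longrightarrow> trans Q (InL a R) Q' \<Longrightarrow> trans (Par P Q) Tau (Par P' Q')"
| t_comR: "trans P (InL a R) P' \<Longrightarrow> trans Q (OutL a R) Q' \<Longrightarrow> trans (Par P Q) Tau (Par P' Q')"

definition tau_step :: "proc \<Rightarrow> proc \<Rightarrow> bool" where
  "tau_step P Q \<longleftrightarrow> trans P Tau Q"

definition wtau :: "proc \<Rightarrow> proc \<Rightarrow> bool" where
  "wtau = tau_step\<^sup>*\<^sup>*"

datatype lterm = LVar nat | App lterm lterm | Lam nat lterm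

fun fv :: "lterm \<Rightarrow> nat set" where
  "fv (LVar x) = {x}"
| "fv (App t s) = fv t \<union> fv s"
| "fv (Lam x t) = fv t - {x}"

(* t{s/x}; only ever applied with closed s *)
fun lsubst :: "lterm \<Rightarrow> nat \<Rightarrow> lterm \<Rightarrow> lterm" where
  "lsubst (LVar y) x s = (if y = x then s else LVar y)"
| "lsubst (App t1 t2) x s = App (lsubst t1 x s) (lsubst t2 x s)"
| "lsubst (Lam y t) x s = (if y = x then Lam y t else Lam y (lsubst t x s))"

type_synonym stack = "lterm list"
type_synonym config = "lterm \<times> stack"

definition closed_config :: "config \<Rightarrow> bool" where
  "closed_config C \<longleftrightarrow> fv (fst C) = {} \<and> (\<forall>s\<in>set (snd C). fv s = {})"

inductive kam_step :: "config \<Rightarrow> config \<Rightarrow> bool" where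
  k_push: "kam_step (App t s, \<pi>) (t, s # \<pi>)"
| k_grab: "kam_step (Lam x t, s # \<pi>) (lsubst t x s, \<pi>)"

fun tr_term :: "lterm \<Rightarrow> proc" where
  "tr_term (App t s) =
     Inp Nc Pv (Par (tr_term t) (Out Nc (Par (Out Nhd (tr_term s)) (Out Nc (PVar Pv)))))"
| "tr_term (Lam x t) = Inp Nc Pv (Par (Inp Nhd (TV x) (tr_term t)) (PVar Pv))"
| "tr_term (LVar x) = PVar (TV x)"

fun tr_stack :: "stack \<Rightarrow> proc" where
  "tr_stack [] = Out Nb Nil"
| "tr_stack (t # \<pi>) = Par (Out Nhd (tr_term t)) (Out Nc (tr_stack \<pi>))"

fun tr_config :: "config \<Rightarrow> proc" where
  "tr_config (t, \<pi>) = Par (tr_term t) (Out Nc (tr_stack \<pi>))"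

end

(*
  Transitions of a process depend only on the multiset of its parallel components, so the
  argument works with these multisets, i.e. up to associativity, commutativity and unit of
  parallel composition. A push step of the KAM is simulated by one handshake on c; a grab step
  by two, first on c (the abstraction receives the stack) and then on hd (it receives the head
  term). Conversely, these handshakes are the only tau-steps available from the encoding of a
  configuration or from the intermediate state of a grab, so every weak tau-derivative of the
  encoding of C encodes a configuration reachable from C. Among these states only the
  intermediate state of a grab on the empty stack has an output on b.
*)
theory Submission
  imports Defs "HOL-Library.Multiset"
begin

lemma add_mset_eq_union_cases:
  assumes "add_mset x M = A + B"
  obtains A' where "A = add_mset x A'" "M = A' + B"
        | B' where "B = add_mset x B'" "M = A + B'"
proof (cases "x \<in># A")
  case True
  then obtain A' where "A = add_mset x A'" by (metis multi_member_split)
  with assms that(1) show ?thesis by simp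
next
  case False
  then have "x \<in># B" using assms by (metis union_iff union_single_eq_member)
  then obtain B' where "B = add_mset x B'" by (metis multi_member_split)
  with assms that(2) show ?thesis by simp
qed

fun components :: "proc \<Rightarrow> proc multiset" where
  "components (Par P Q) = components P + components Q"
| "components Nil = {#}"
| "components P = {#P#}"

lemma trans_OutL_components:
  "trans P (OutL a R) Q \<Longrightarrow> components P = add_mset (Out a R) (components Q)"
  by (induction P "OutL a R" Q rule: trans.induct) auto

lemma trans_InL_components:
  "trans P (InL a R) Q \<Longrightarrow>
     \<exists>y B M. components P = add_mset (Inp a y B) M \<and> components Q = components (psubst B y R) + M"
proof (induction P "InL a R" Q rule: trans.induct)
  case (t_parL P P' Q)
  then show ?case by (fastforce simp: ac_simps)
next
  case (t_parR Q Q' P)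
  then show ?case by (fastforce simp: ac_simps)
qed auto

lemma trans_Tau_components:
  "trans P Tau Q \<Longrightarrow>
     \<exists>a R y B M. components P = add_mset (Inp a y B) (add_mset (Out a R) M) \<and>
                 components Q = components (psubst B y R) + M"
proof (induction P Tau Q rule: trans.induct)
  case (t_comL P a R P' Q Q')
  obtain y B M where "components Q = add_mset (Inp a y B) M"
    and "components Q' = components (psubst B y R) + M"
    using trans_InL_components[OF t_comL(2)] by blast
  with trans_OutL_components[OF t_comL(1)] show ?case
    by (intro exI[of _ a] exI[of _ R] exI[of _ y] exI[of _ B] exI[of _ "components P' + M"])
       (simp add: ac_simps add_mset_commute)
next
  case (t_comR P a R P' Q Q')
  obtain y B M where "components P = add_mset (Inp a y B) M"
    and "components P' = components (psubst B y R) + M"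
    using trans_InL_components[OF t_comR(1)] by blast
  with trans_OutL_components[OF t_comR(2)] show ?case
    by (intro exI[of _ a] exI[of _ R] exI[of _ y] exI[of _ B] exI[of _ "M + components Q'"])
       (simp add: ac_simps add_mset_commute)
qed (fastforce simp: ac_simps)+

lemma components_imp_trans_OutL:
  "components P = add_mset (Out a R) M \<Longrightarrow> \<exists>Q. trans P (OutL a R) Q \<and> components Q = M"
proof (induction P arbitrary: M)
  case (Par P1 P2)
  from Par.prems have "add_mset (Out a R) M = components P1 + components P2" by simp
  then show ?case
  proof (cases rule: add_mset_eq_union_cases)
    case (1 M1)
    with Par.IH(1) obtain Q1 where "trans P1 (OutL a R) Q1" "components Q1 = M1" by blast
    with 1 show ?thesis by (auto intro: t_parL)
  next
    case (2 M2)
    with Par.IH(2) obtain Q2 where "trans P2 (OutL a R) Q2" "components Q2 = M2" by blast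
    with 2 show ?thesis by (auto intro: t_parR)
  qed
qed (auto intro: t_out)

lemma components_imp_trans_InL:
  "components P = add_mset (Inp a y B) M \<Longrightarrow>
     \<exists>Q. trans P (InL a R) Q \<and> components Q = components (psubst B y R) + M"
proof (induction P arbitrary: M)
  case (Par P1 P2)
  from Par.prems have "add_mset (Inp a y B) M = components P1 + components P2" by simp
  then show ?case
  proof (cases rule: add_mset_eq_union_cases)
    case (1 M1)
    with Par.IH(1) obtain Q1 where "trans P1 (InL a R) Q1"
      "components Q1 = components (psubst B y R) + M1" by blast
    with 1 show ?thesis by (auto intro: t_parL simp: ac_simps)
  next
    case (2 M2)
    with Par.IH(2) obtain Q2 where "trans P2 (InL a R) Q2"
      "components Q2 = components (psubst B y R) + M2" by blast
    with 2 show ?thesis by (auto intro: t_parR simp: ac_simps)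
  qed
qed (auto intro: t_inp)

lemma components_imp_trans_Tau:
  "components P = add_mset (Inp a y B) (add_mset (Out a R) M) \<Longrightarrow>
     \<exists>Q. trans P Tau Q \<and> components Q = components (psubst B y R) + M"
proof (induction P arbitrary: M)
  case (Par P1 P2)
  from Par.prems
  have "add_mset (Out a R) (add_mset (Inp a y B) M) = components P1 + components P2"
    by (simp add: add_mset_commute)
  then show ?case
  proof (cases rule: add_mset_eq_union_cases)
    case (1 M1)
    from 1(2) show ?thesis
    proof (cases rule: add_mset_eq_union_cases)
      case (1 M1')
      with \<open>components P1 = add_mset (Out a R) M1\<close>
      have "components P1 = add_mset (Inp a y B) (add_mset (Out a R) M1')"
        by (simp add: add_mset_commute)
      with Par.IH(1)
      obtain Q1 where "trans P1 Tau Q1" "components Q1 = components (psubst B y R) + M1'" by blast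
      with 1 show ?thesis by (auto intro: t_parL simp: ac_simps)
    next
      case (2 M2)
      obtain Q1 where "trans P1 (OutL a R) Q1" "components Q1 = M1"
        using components_imp_trans_OutL \<open>components P1 = add_mset (Out a R) M1\<close> by blast
      moreover obtain Q2 where "trans P2 (InL a R) Q2"
        "components Q2 = components (psubst B y R) + M2"
        using components_imp_trans_InL 2(1) by blast
      ultimately show ?thesis using 2(2) by (auto intro: t_comL simp: ac_simps)
    qed
  next
    case (2 M2)
    from 2(2) show ?thesis
    proof (cases rule: add_mset_eq_union_cases)
      case (1 M1)
      obtain Q1 where "trans P1 (InL a R) Q1" "components Q1 = components (psubst B y R) + M1"
        using components_imp_trans_InL 1(1) by blast
      moreover obtain Q2 where "trans P2 (OutL a R) Q2" "components Q2 = M2"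
        using components_imp_trans_OutL \<open>components P2 = add_mset (Out a R) M2\<close> by blast
      ultimately show ?thesis using 1(2) by (auto intro: t_comR simp: ac_simps)
    next
      case (2 M2')
      with \<open>components P2 = add_mset (Out a R) M2\<close>
      have "components P2 = add_mset (Inp a y B) (add_mset (Out a R) M2')"
        by (simp add: add_mset_commute)
      with Par.IH(2)
      obtain Q2 where "trans P2 Tau Q2" "components Q2 = components (psubst B y R) + M2'" by blast
      with 2 show ?thesis by (auto intro: t_parR simp: ac_simps)
    qed
  qed
qed auto

lemma components_tr_term [simp]: "components (tr_term t) = {#tr_term t#}"
  by (cases t) auto

lemma tr_term_neq_Out [simp]: "tr_term t \<noteq> Out a R" "Out a R \<noteq> tr_term t"
  by (cases t; simp)+

lemma psubst_tr_term_Pv [simp]: "psubst (tr_term t) Pv P = tr_term t"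
  by (induction t) auto

lemma psubst_tr_term_TV: "psubst (tr_term t) (TV x) (tr_term s) = tr_term (lsubst t x s)"
  by (induction t) auto

(* Halfway through a grab: the abstraction has received the stack on c and waits on hd. *)
definition grabbing :: "nat \<Rightarrow> lterm \<Rightarrow> stack \<Rightarrow> proc multiset" where
  "grabbing x t \<pi> = add_mset (Inp Nhd (TV x) (tr_term t)) (components (tr_stack \<pi>))"

lemma tau_step_push:
  assumes "components P = components (tr_config (App t s, \<pi>))"
  shows "\<exists>Q. tau_step P Q \<and> components Q = components (tr_config (t, s # \<pi>))"
proof -
  have "components P = {#Inp Nc Pv (Par (tr_term t) (Out Nc (Par (Out Nhd (tr_term s)) (Out Nc (PVar Pv))))),
                         Out Nc (tr_stack \<pi>)#}"
    using assms by (simp add: add_mset_commute)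
  from components_imp_trans_Tau[OF this] show ?thesis
    by (simp add: tau_step_def)
qed

lemma tau_step_grab_stack:
  assumes "components P = components (tr_config (Lam x t, \<pi>))"
  shows "\<exists>Q. tau_step P Q \<and> components Q = grabbing x t \<pi>"
proof -
  have "components P = {#Inp Nc Pv (Par (Inp Nhd (TV x) (tr_term t)) (PVar Pv)), Out Nc (tr_stack \<pi>)#}"
    using assms by (simp add: add_mset_commute)
  from components_imp_trans_Tau[OF this] show ?thesis
    by (simp add: tau_step_def grabbing_def)
qed

lemma tau_step_grab_head:
  assumes "components P = grabbing x t (s # \<pi>)"
  shows "\<exists>Q. tau_step P Q \<and> components Q = components (tr_config (lsubst t x s, \<pi>))"
proof -
  have "components P = {#Inp Nhd (TV x) (tr_term t), Out Nhd (tr_term s), Out Nc (tr_stack \<pi>)#}"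
    using assms by (simp add: grabbing_def)
  from components_imp_trans_Tau[OF this] show ?thesis
    by (simp add: tau_step_def psubst_tr_term_TV)
qed

lemma tau_step_from_tr_config:
  assumes "tau_step P Q" and P: "components P = components (tr_config (t, \<pi>))"
  shows "(\<exists>t' s. t = App t' s \<and> components Q = components (tr_config (t', s # \<pi>))) \<or>
         (\<exists>x t'. t = Lam x t' \<and> components Q = grabbing x t' \<pi>)"
proof -
  obtain a R y B M where
    handshake: "components P = add_mset (Inp a y B) (add_mset (Out a R) M)" and
    Q: "components Q = components (psubst B y R) + M"
    using trans_Tau_components assms(1) unfolding tau_step_def by blast
  from handshake P have "tr_term t = Inp a y B" "a = Nc" "R = tr_stack \<pi>" "M = {#}"
    by (auto simp: add_eq_conv_ex)
  with Q show ?thesis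
    by (cases t) (auto simp: grabbing_def)
qed

lemma tau_step_from_grabbing:
  assumes "tau_step P Q" and P: "components P = grabbing x t \<pi>"
  shows "\<exists>s \<pi>'. \<pi> = s # \<pi>' \<and> components Q = components (tr_config (lsubst t x s, \<pi>'))"
proof -
  obtain a R y B M where
    handshake: "components P = add_mset (Inp a y B) (add_mset (Out a R) M)" and
    Q: "components Q = components (psubst B y R) + M"
    using trans_Tau_components assms(1) unfolding tau_step_def by blast
  have "Inp a y B = Inp Nhd (TV x) (tr_term t)" "add_mset (Out a R) M = components (tr_stack \<pi>)"
    using handshake P by (cases \<pi>; auto simp: grabbing_def add_eq_conv_ex)+
  with Q show ?thesis
    by (cases \<pi>) (auto simp: add_eq_conv_ex psubst_tr_term_TV)
qed

lemma kam_step_simulation: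
  assumes "kam_step C C'" and P: "components P = components (tr_config C)"
  shows "\<exists>P'. wtau P P' \<and> components P' = components (tr_config C')"
  using assms(1)
proof cases
  case (k_push t s \<pi>)
  with P tau_step_push show ?thesis
    unfolding wtau_def by (metis r_into_rtranclp)
next
  case (k_grab x t s \<pi>)
  obtain Q where "tau_step P Q" "components Q = grabbing x t (s # \<pi>)"
    using tau_step_grab_stack P k_grab by blast
  moreover obtain P' where "tau_step Q P'" "components P' = components (tr_config C')"
    using tau_step_grab_head calculation(2) k_grab by blast
  ultimately show ?thesis
    unfolding wtau_def by (metis converse_rtranclp_into_rtranclp r_into_rtranclp)
qed

lemma kam_steps_simulation:
  assumes "kam_step\<^sup>*\<^sup>* C C'" "components P = components (tr_config C)"
  shows "\<exists>P'. wtau P P' \<and> components P' = components (tr_config C')"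
  using assms
proof (induction rule: rtranclp_induct)
  case base
  then show ?case by (auto simp: wtau_def)
next
  case (step C' C'')
  then obtain P' where "wtau P P'" "components P' = components (tr_config C')" by blast
  with kam_step_simulation[OF step.hyps(2)] show ?case
    unfolding wtau_def by (metis rtranclp_trans)
qed

lemma tr_config_Lam_Nil_barb:
  assumes "components P = components (tr_config (Lam x t, []))"
  shows "\<exists>P' R. wtau P P' \<and> trans P' (OutL Nb Nil) R"
proof -
  obtain P' where "tau_step P P'" "components P' = grabbing x t []"
    using tau_step_grab_stack assms by blast
  moreover have "grabbing x t [] = add_mset (Out Nb Nil) {#Inp Nhd (TV x) (tr_term t)#}"
    by (simp add: grabbing_def)
  ultimately show ?thesis
    using components_imp_trans_OutL unfolding wtau_def by (metis r_into_rtranclp)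
qed

inductive encodes :: "config \<Rightarrow> proc multiset \<Rightarrow> bool" where
  encodes_tr_config: "encodes (t, \<pi>) (components (tr_config (t, \<pi>)))"
| encodes_grabbing: "encodes (Lam x t, \<pi>) (grabbing x t \<pi>)"

lemma encodes_tau_step:
  assumes "encodes C (components P)" "tau_step P Q"
  shows "\<exists>C'. kam_step\<^sup>*\<^sup>* C C' \<and> encodes C' (components Q)"
  using assms(1)
proof cases
  case (encodes_tr_config t \<pi>)
  from tau_step_from_tr_config[OF assms(2) encodes_tr_config(2)] show ?thesis
  proof
    assume "\<exists>t' s. t = App t' s \<and> components Q = components (tr_config (t', s # \<pi>))"
    then show ?thesis
      using encodes_tr_config(1) by (metis encodes.encodes_tr_config k_push r_into_rtranclp)
  next
    assume "\<exists>x t'. t = Lam x t' \<and> components Q = grabbing x t' \<pi>"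
    then show ?thesis
      using encodes_tr_config(1) by (metis encodes.encodes_grabbing rtranclp.rtrancl_refl)
  qed
next
  case (encodes_grabbing x t \<pi>)
  with tau_step_from_grabbing[OF assms(2)] show ?thesis
    by (metis encodes.encodes_tr_config k_grab r_into_rtranclp)
qed

lemma wtau_encodes:
  assumes "wtau (tr_config C) P"
  shows "\<exists>C'. kam_step\<^sup>*\<^sup>* C C' \<and> encodes C' (components P)"
  using assms unfolding wtau_def
proof (induction rule: rtranclp_induct)
  case base
  show ?case by (metis encodes_tr_config rtranclp.rtrancl_refl surj_pair)
next
  case (step P P')
  then obtain C' where "kam_step\<^sup>*\<^sup>* C C'" "encodes C' (components P)" by blast
  with encodes_tau_step[OF _ step.hyps(2)] show ?case
    by (metis rtranclp_trans)
qed

lemma encodes_barb: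
  assumes "encodes C M" "Out Nb Q \<in># M"
  shows "\<exists>x t. C = (Lam x t, [])"
  using assms
proof cases
  case (encodes_grabbing x t \<pi>)
  with assms(2) show ?thesis by (cases \<pi>) (auto simp: grabbing_def)
qed auto

theorem corollary3p2:
  fixes C :: config
  assumes "closed_config C"
  shows "(\<exists>x t. kam_step\<^sup>*\<^sup>* C (Lam x t, [])) \<longleftrightarrow>
         (\<exists>P' Q R. wtau (tr_config C) P' \<and> trans P' (OutL Nb Q) R)"
proof
  assume "\<exists>x t. kam_step\<^sup>*\<^sup>* C (Lam x t, [])"
  then obtain x t where "kam_step\<^sup>*\<^sup>* C (Lam x t, [])" by blast
  from kam_steps_simulation[OF this refl] obtain P
    where "wtau (tr_config C) P" "components P = components (tr_config (Lam x t, []))" by blast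
  moreover from tr_config_Lam_Nil_barb[OF this(2)]
  obtain P' R where "wtau P P'" "trans P' (OutL Nb Nil) R" by blast
  ultimately show "\<exists>P' Q R. wtau (tr_config C) P' \<and> trans P' (OutL Nb Q) R"
    unfolding wtau_def by (meson rtranclp_trans)
next
  assume "\<exists>P' Q R. wtau (tr_config C) P' \<and> trans P' (OutL Nb Q) R"
  then obtain P' Q R where "wtau (tr_config C) P'" "trans P' (OutL Nb Q) R" by blast
  from wtau_encodes[OF this(1)]
  obtain C' where "kam_step\<^sup>*\<^sup>* C C'" "encodes C' (components P')" by blast
  moreover have "Out Nb Q \<in># components P'"
    using trans_OutL_components[OF \<open>trans P' (OutL Nb Q) R\<close>] by simp
  ultimately show "\<exists>x t. kam_step\<^sup>*\<^sup>* C (Lam x t, [])"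
    using encodes_barb by blast
qed

end
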